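(* Let $N \ge 1$ be an integer and let $(X_1, X_2, \dots, X_N)$ be a time-homogeneous Markov chain on the two-state space $\{S_0, S_1\}$ with initial distribution $\mathbb{P}(X_1 = S_0) = p_0$, $\mathbb{P}(X_1 = S_1) = p_1$ (where $p_0,p_1\ge 0$, $p_0+p_1=1$) and transition probabilities $p_{ij} = \mathbb{P}(X_{t+1} = S_j \mid X_t = S_i)$ for $i,j \in \{0,1\}$ (so $p_{00}+p_{01}=1$ and $p_{10}+p_{11}=1$). Let $N_1 = \#\{t \in \{1,\dots,N\} : X_t = S_1\}$ be the number of visits to $S_1$ (the initial state counts as a visit). Then for every integer $k$ with $0 \le k \le N$, $$\mathbb{P}(N_1 = k) = p_1\, \mathbb{P}_1(k,N \mid S_1) + p_0\, \mathbb{P}_2(k,N \mid S_0),$$ where $$\mathbb{P}_1(k,N\mid S_1) = \begin{cases} 0 & k=0,\\[2pt] \displaystyle\sum_{j=1}^{c_1(k,N)} \binom{k-1}{j-1} p_{11}^{k-j} p_{10}^{j} \binom{N-k-1}{j-1} p_{01}^{j-1} p_{00}^{N-k-j} + \sum_{j=1}^{c_2(k,N)} \binom{k-1}{j} p_{11}^{k-j-1} p_{10}^{j} \binom{N-k-1}{j-1} p_{01}^{j} p_{00}^{N-k-j} & 0<k<N,\\[2pt] p_{11}^{N-1} & k=N,\end{cases}$$ $$\mathbb{P}_2(k,N\mid S_0) = \begin{cases} p_{00}^{N-1} & k=0,\\[2pt] \displaystyle\sum_{j=1}^{c_1(k,N)} \binom{k-1}{j-1} p_{11}^{k-j} p_{10}^{j-1}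 \binom{N-k-1}{j-1} p_{01}^{j} p_{00}^{N-k-j} + \sum_{j=1}^{c_3(k,N)} \binom{k-1}{j-1} p_{11}^{k-j} p_{10}^{j} \binom{N-k-1}{j} p_{01}^{j} p_{00}^{N-k-j-1} & 0<k<N,\\[2pt] 0 & k=N,\end{cases}$$ with $c_1(k,N) = \min(k, N-k)$, $c_2(k,N) = \min(k-1, N-k)$, $c_3(k,N) = \min(k, N-k-1)$ (an empty sum is $0$, and $0^0 = 1$).
   Context: The chain consists of $N$ states $X_1,\dots,X_N$: the initial state $X_1$ is drawn from $(p_0,p_1)$ and is followed by $N-1$ transitions. $\mathbb{P}_1(k,N\mid S_1)$ is the probability that $N_1=k$ given $X_1=S_1$, and $\mathbb{P}_2(k,N\mid S_0)$ is the probability that $N_1=k$ given $X_1=S_0$; the displayed formulas give their explicit values. *)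

theory Defs
  imports "HOL-Probability.Probability"
begin

text \<open>States: False = S_0, True = S_1.\<close>

definition init_prob :: "real \<Rightarrow> real \<Rightarrow> bool \<Rightarrow> real" where
  "init_prob p0 p1 s = (if s then p1 else p0)"

definition trans_prob :: "real \<Rightarrow> real \<Rightarrow> real \<Rightarrow> real \<Rightarrow> bool \<Rightarrow> bool \<Rightarrow> real" where
  "trans_prob p00 p01 p10 p11 a b =
     (if a then (if b then p11 else p10) else (if b then p01 else p00))"

definition c1 :: "nat \<Rightarrow> nat \<Rightarrow> nat" where "c1 k N = min k (N - k)"
definition c2 :: "nat \<Rightarrow> nat \<Rightarrow> nat" where "c2 k N = min (k - 1) (N - k)"
definition c3 :: "nat \<Rightarrow> nat \<Rightarrow> nat" where "c3 k N = min k (N - k - 1)"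

definition P1 :: "real \<Rightarrow> real \<Rightarrow> real \<Rightarrow> real \<Rightarrow> nat \<Rightarrow> nat \<Rightarrow> real" where
  "P1 p00 p01 p10 p11 k N =
    (if k = 0 then 0
     else if k < N then
       (\<Sum>j=1..c1 k N. real ((k-1) choose (j-1)) * p11^(k-j) * p10^j
            * real ((N-k-1) choose (j-1)) * p01^(j-1) * p00^(N-k-j))
     + (\<Sum>j=1..c2 k N. real ((k-1) choose j) * p11^(k-j-1) * p10^j
            * real ((N-k-1) choose (j-1)) * p01^j * p00^(N-k-j))
     else if k = N then p11^(N-1) else 0)"

definition P2 :: "real \<Rightarrow> real \<Rightarrow> real \<Rightarrow> real \<Rightarrow> nat \<Rightarrow> nat \<Rightarrow> real" where
  "P2 p00 p01 p10 p11 k N =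
    (if k = 0 then p00^(N-1)
     else if k < N then
       (\<Sum>j=1..c1 k N. real ((k-1) choose (j-1)) * p11^(k-j) * p10^(j-1)
            * real ((N-k-1) choose (j-1)) * p01^j * p00^(N-k-j))
     + (\<Sum>j=1..c3 k N. real ((k-1) choose (j-1)) * p11^(k-j) * p10^j
            * real ((N-k-1) choose j) * p01^j * p00^(N-k-j-1))
     else 0)"

end

theory Submission
  imports Defs
begin

text \<open>Cutting the event \<open>N\<^sub>1 = k\<close> into cylinders, one for each 0/1 trajectory with \<open>k\<close> ones,
  the Markov property gives its probability as a sum of path weights (initial weight times the
  product of the transition weights along the path). Split by the initial state, these sums satisfy
  the first-step recursions \<open>W\<^sub>1(a+1, z) = p11 W\<^sub>1(a, z) + p10 W\<^sub>0(a, z)\<close> and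
  \<open>W\<^sub>0(a, z+1) = p01 W\<^sub>1(a, z) + p00 W\<^sub>0(a, z)\<close> in the numbers \<open>a\<close>, \<open>z\<close> of visits to \<open>S\<^sub>1\<close>, \<open>S\<^sub>0\<close>.
  The paper's formulas count the paths by their runs, a run structure being a pair of
  compositions of \<open>a\<close> and \<open>z\<close>; Pascal's rule for compositions shows that they satisfy the
  same recursions and boundary values. Exchanging the two states turns paths from \<open>S\<^sub>1\<close> into
  paths from \<open>S\<^sub>0\<close>, so only the first recursion has to be checked.\<close>

lemma sum_atMost_eq_first: "(\<And>j. f (Suc j) = 0) \<Longrightarrow> (\<Sum>j\<le>M. f j) = f 0"
  by (induction M) auto

lemma sum_atMost_shift_neutral:
  fixes f g :: "nat \<Rightarrow> 'a::comm_monoid_add"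
  assumes "f 0 = 0" "g M = 0" "\<And>j. f (Suc j) = g j"
  shows "(\<Sum>j\<le>M. f j) = (\<Sum>j\<le>M. g j)"
proof -
  have "(\<Sum>j\<le>M. f j) = (\<Sum>j<M. g j)"
    using assms by (simp add: sum.atMost_shift)
  also have "\<dots> = (\<Sum>j\<le>M. g j)"
    using assms by (simp flip: lessThan_Suc_atMost)
  finally show ?thesis .
qed

lemma sum_atMost_eq_sum_atLeastAtMost:
  fixes f g :: "nat \<Rightarrow> 'a::comm_monoid_add"
  assumes "c \<le> M" "f 0 = 0" "\<And>j. c < j \<Longrightarrow> f j = 0" "\<And>j. 1 \<le> j \<Longrightarrow> j \<le> c \<Longrightarrow> f j = g j"
  shows "(\<Sum>j\<le>M. f j) = (\<Sum>j=1..c. g j)"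
proof -
  have "(\<Sum>j=1..c. g j) = (\<Sum>j=1..c. f j)"
    using assms(4) by (intro sum.cong) auto
  also have "\<dots> = (\<Sum>j\<le>M. f j)"
  proof (rule sum.mono_neutral_left)
    show "\<forall>j\<in>{..M} - {1..c}. f j = 0"
      using assms(2,3) by (metis DiffE atLeastAtMost_iff less_one not_le)
  qed (use assms(1) in auto)
  finally show ?thesis by simp
qed

lemma sum_bool_lists_length_Suc:
  "(\<Sum>xs | length xs = Suc n \<and> P xs. f xs)
   = (\<Sum>ys | length ys = n \<and> P (True # ys). f (True # ys))
     + (\<Sum>ys | length ys = n \<and> P (False # ys). f (False # ys))"
proof -
  let ?L = "\<lambda>b. {ys. length ys = n \<and> P (b # ys)}"
  have fin: "finite (?L b)" for b
    using finite_lists_length_eq[of "UNIV :: bool set" n] by (rule finite_subset[rotated]) auto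
  have "{xs. length xs = Suc n \<and> P xs} = Cons True ` ?L True \<union> Cons False ` ?L False"
  proof (intro set_eqI iffI)
    fix xs assume "xs \<in> {xs. length xs = Suc n \<and> P xs}"
    then obtain y ys where "xs = y # ys" "length ys = n" "P (y # ys)"
      by (auto simp: length_Suc_conv)
    then show "xs \<in> Cons True ` ?L True \<union> Cons False ` ?L False" by (cases y) auto
  qed auto
  then have "(\<Sum>xs | length xs = Suc n \<and> P xs. f xs)
      = sum f (Cons True ` ?L True) + sum f (Cons False ` ?L False)"
    by (simp only:) (rule sum.union_disjoint; use fin in auto)
  then show ?thesis by (simp add: sum.reindex)
qed

fun path_weight :: "(bool \<Rightarrow> bool \<Rightarrow> real) \<Rightarrow> bool list \<Rightarrow> real" where
  "path_weight T (x # y # zs) = T x y * path_weight T (y # zs)"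
| "path_weight T _ = 1"

lemma path_weight_eq_prod: "path_weight T xs = (\<Prod>t\<in>{1..<length xs}. T (xs ! (t - 1)) (xs ! t))"
proof (induction T xs rule: path_weight.induct)
  case (1 T x y zs)
  let ?xs = "x # y # zs"
  have "(\<Prod>t\<in>{1..<length ?xs}. T (?xs ! (t - 1)) (?xs ! t))
      = T x y * (\<Prod>t\<in>{Suc 1..<Suc (Suc (length zs))}. T (?xs ! (t - 1)) (?xs ! t))"
    by (subst prod.atLeast_Suc_lessThan) auto
  also have "(\<Prod>t\<in>{Suc 1..<Suc (Suc (length zs))}. T (?xs ! (t - 1)) (?xs ! t))
      = (\<Prod>t\<in>{1..<Suc (length zs)}. T (?xs ! t) (?xs ! Suc t))"
    by (subst prod.shift_bounds_Suc_ivl) simp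
  also have "\<dots> = (\<Prod>t\<in>{1..<length (y # zs)}. T ((y # zs) ! (t - 1)) ((y # zs) ! t))"
    by (intro prod.cong) (auto simp: nth_Cons')
  finally show ?case using 1 by simp
qed auto

definition paths_weight :: "(bool \<Rightarrow> bool \<Rightarrow> real) \<Rightarrow> bool \<Rightarrow> nat \<Rightarrow> nat \<Rightarrow> real" where
  "paths_weight T b n k =
     (\<Sum>ys | length ys = n \<and> length (filter id (b # ys)) = k. path_weight T (b # ys))"

lemma paths_weight_0: "paths_weight T b 0 k = of_bool (of_bool b = k)"
proof -
  have "{ys :: bool list. length ys = 0 \<and> length (filter id (b # ys)) = k}
      = (if of_bool b = k then {[]} else {})"
    by auto
  then show ?thesis by (simp add: paths_weight_def)
qed

lemma paths_weight_eq_0: "Suc n < k \<Longrightarrow> paths_weight T b n k = 0"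
proof -
  assume "Suc n < k"
  moreover have "length (filter id (b # ys)) \<le> Suc (length ys)" for ys
    using length_filter_le[of id "b # ys"] by simp
  ultimately have "{ys. length ys = n \<and> length (filter id (b # ys)) = k} = {}"
    by (metis (mono_tags, lifting) empty_Collect_eq not_le)
  then show ?thesis unfolding paths_weight_def by (simp only: sum.empty)
qed

lemma paths_weight_True_0: "paths_weight T True n 0 = 0"
  by (simp add: paths_weight_def)

lemma paths_weight_True_Suc:
  "paths_weight T True (Suc n) (Suc k)
   = T True True * paths_weight T True n k + T True False * paths_weight T False n k"
  unfolding paths_weight_def sum_bool_lists_length_Suc
  by (simp add: sum_distrib_left)

lemma paths_weight_False_Suc:
  "paths_weight T False (Suc n) k
   = T False True * paths_weight T True n k + T False False * paths_weight T False n k"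
  unfolding paths_weight_def sum_bool_lists_length_Suc
  by (simp add: sum_distrib_left)

fun ncompositions :: "nat \<Rightarrow> nat \<Rightarrow> nat" where
  "ncompositions 0 j = (if j = 0 then 1 else 0)"
| "ncompositions (Suc a) 0 = 0"
| "ncompositions (Suc a) (Suc j) = a choose j"

lemma ncompositions_Suc_Suc:
  "ncompositions (Suc a) (Suc j) = ncompositions a (Suc j) + ncompositions a j"
  by (cases a; cases j) auto

lemma ncompositions_eq_0: "a < j \<Longrightarrow> ncompositions a j = 0"
  by (cases a; cases j) auto

lemma ncompositions_eq_binomial:
  "0 < a \<Longrightarrow> 0 < j \<Longrightarrow> ncompositions a j = (a - 1) choose (j - 1)"
  by (cases a; cases j) auto

text \<open>Weight of spreading \<open>a\<close> visits to a state over \<open>j\<close> runs when each of the \<open>a - j\<close>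
  steps that stay in the state has weight \<open>x\<close>.\<close>

definition runs_weight :: "real \<Rightarrow> nat \<Rightarrow> nat \<Rightarrow> real" where
  "runs_weight x a j = real (ncompositions a j) * x ^ (a - j)"

lemma runs_weight_Suc_Suc:
  "runs_weight x (Suc a) (Suc j) = x * runs_weight x a (Suc j) + runs_weight x a j"
proof (cases "Suc j \<le> a")
  case True
  then have "a - j = Suc (a - Suc j)" by arith
  then show ?thesis unfolding runs_weight_def ncompositions_Suc_Suc by (simp add: algebra_simps)
next
  case False
  then show ?thesis unfolding runs_weight_def ncompositions_Suc_Suc by (simp add: ncompositions_eq_0)
qed

lemma runs_weight_eq_0: "a < j \<Longrightarrow> runs_weight x a j = 0"
  by (simp add: runs_weight_def ncompositions_eq_0)

lemma runs_weight_0_right: "runs_weight x a 0 = of_bool (a = 0)"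
  by (cases a) (simp_all add: runs_weight_def)

lemma runs_weight_0_left: "runs_weight x 0 j = of_bool (j = 0)"
  by (simp add: runs_weight_def)

lemma runs_weight_Suc_1: "runs_weight x (Suc a) (Suc 0) = x ^ a"
  by (simp add: runs_weight_def)

lemma runs_weight_eq_binomial:
  "0 < a \<Longrightarrow> 0 < j \<Longrightarrow> runs_weight x a j = real ((a - 1) choose (j - 1)) * x ^ (a - j)"
  by (simp add: runs_weight_def ncompositions_eq_binomial)

text \<open>Grouping the paths from \<open>S\<^sub>1\<close> with \<open>a\<close> visits to \<open>S\<^sub>1\<close> and \<open>z\<close> visits to \<open>S\<^sub>0\<close> by
  the number \<open>j\<close> of transitions \<open>S\<^sub>1 \<rightarrow> S\<^sub>0\<close>: those ending in \<open>S\<^sub>0\<close> have \<open>j\<close> runs of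
  each state, those ending in \<open>S\<^sub>1\<close> have \<open>j + 1\<close> runs of \<open>S\<^sub>1\<close>. The summation bound \<open>M\<close>
  is arbitrary once it exceeds \<open>a + z\<close>. Paths from \<open>S\<^sub>0\<close> are obtained by exchanging the two states,
  i.e. by \<open>from_one_weight p11 p10 p01 p00 M z a\<close>.\<close>

definition switch_weight :: "real \<Rightarrow> real \<Rightarrow> real \<Rightarrow> real \<Rightarrow> nat \<Rightarrow> nat \<Rightarrow> nat \<Rightarrow> real" where
  "switch_weight p00 p01 p10 p11 M a z =
     (\<Sum>j\<le>M. runs_weight p11 a j * runs_weight p00 z j * p10 ^ j * p01 ^ (j - 1))"

definition return_weight :: "real \<Rightarrow> real \<Rightarrow> real \<Rightarrow> real \<Rightarrow> nat \<Rightarrow> nat \<Rightarrow> nat \<Rightarrow> real" where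
  "return_weight p00 p01 p10 p11 M a z =
     (\<Sum>j\<le>M. runs_weight p11 a (Suc j) * runs_weight p00 z j * p10 ^ j * p01 ^ j)"

definition from_one_weight :: "real \<Rightarrow> real \<Rightarrow> real \<Rightarrow> real \<Rightarrow> nat \<Rightarrow> nat \<Rightarrow> nat \<Rightarrow> real" where
  "from_one_weight p00 p01 p10 p11 M a z =
     switch_weight p00 p01 p10 p11 M a z + return_weight p00 p01 p10 p11 M a z"

lemma switch_weight_Suc:
  assumes "0 < a + z" "a + z < M"
  shows "switch_weight p00 p01 p10 p11 M (Suc a) z
    = p11 * switch_weight p00 p01 p10 p11 M a z + p10 * return_weight p11 p10 p01 p00 M z a"
proof -
  let ?R1 = "runs_weight p11" and ?R0 = "runs_weight p00"
  have pascal: "?R1 (Suc a) j * ?R0 z j * p10 ^ j * p01 ^ (j - 1)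
      = p11 * (?R1 a j * ?R0 z j * p10 ^ j * p01 ^ (j - 1))
        + p10 * (?R1 a (j - 1) * ?R0 z j * p10 ^ (j - 1) * p01 ^ (j - 1))" for j
  proof (cases j)
    case 0
    then show ?thesis using assms by (auto simp: runs_weight_0_right)
  next
    case (Suc i)
    then show ?thesis by (simp add: runs_weight_Suc_Suc algebra_simps)
  qed
  have "switch_weight p00 p01 p10 p11 M (Suc a) z
      = p11 * switch_weight p00 p01 p10 p11 M a z
        + p10 * (\<Sum>j\<le>M. ?R1 a (j - 1) * ?R0 z j * p10 ^ (j - 1) * p01 ^ (j - 1))"
    unfolding switch_weight_def pascal by (simp add: sum.distrib sum_distrib_left)
  also have "(\<Sum>j\<le>M. ?R1 a (j - 1) * ?R0 z j * p10 ^ (j - 1) * p01 ^ (j - 1))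
      = return_weight p11 p10 p01 p00 M z a"
    unfolding return_weight_def
    by (rule sum_atMost_shift_neutral)
      (use assms in \<open>simp_all add: runs_weight_0_right runs_weight_eq_0 mult_ac\<close>)
  finally show ?thesis .
qed

lemma return_weight_Suc:
  assumes "0 < a + z"
  shows "return_weight p00 p01 p10 p11 M (Suc a) z
    = p11 * return_weight p00 p01 p10 p11 M a z + p10 * switch_weight p11 p10 p01 p00 M z a"
proof -
  let ?R1 = "runs_weight p11" and ?R0 = "runs_weight p00"
  have pascal: "?R1 (Suc a) (Suc j) * ?R0 z j * p10 ^ j * p01 ^ j
      = p11 * (?R1 a (Suc j) * ?R0 z j * p10 ^ j * p01 ^ j)
        + p10 * (?R0 z j * ?R1 a j * p01 ^ j * p10 ^ (j - 1))" for j
  proof (cases j)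
    case 0
    then show ?thesis using assms by (simp add: runs_weight_Suc_Suc runs_weight_0_right algebra_simps)
  next
    case (Suc i)
    then show ?thesis by (simp add: runs_weight_Suc_Suc algebra_simps)
  qed
  show ?thesis
    unfolding return_weight_def switch_weight_def pascal
    by (simp add: sum.distrib sum_distrib_left)
qed

lemma from_one_weight_Suc:
  "0 < a + z \<Longrightarrow> a + z < M \<Longrightarrow> from_one_weight p00 p01 p10 p11 M (Suc a) z
    = p11 * from_one_weight p00 p01 p10 p11 M a z + p10 * from_one_weight p11 p10 p01 p00 M z a"
  unfolding from_one_weight_def
  by (simp add: switch_weight_Suc return_weight_Suc algebra_simps)

lemma from_one_weight_0_right:
  "0 < a \<Longrightarrow> from_one_weight p00 p01 p10 p11 M a 0 = p11 ^ (a - 1)"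
  unfolding from_one_weight_def switch_weight_def return_weight_def
  by (cases a) (simp_all add: sum_atMost_eq_first runs_weight_0_left runs_weight_0_right runs_weight_Suc_1)

lemma from_one_weight_0_left:
  "0 < z \<Longrightarrow> from_one_weight p00 p01 p10 p11 M 0 z = 0"
  unfolding from_one_weight_def switch_weight_def return_weight_def
  by (simp add: sum_atMost_eq_first runs_weight_0_left runs_weight_0_right)

lemma from_one_weight_eq_P1:
  assumes "0 < a + z" "a + z \<le> M"
  shows "from_one_weight p00 p01 p10 p11 M a z = P1 p00 p01 p10 p11 a (a + z)"
proof -
  consider "a = 0" | "z = 0" | "0 < a" "0 < z" by auto
  then show ?thesis
  proof cases
    case 1
    then show ?thesis using assms by (simp add: from_one_weight_0_left P1_def)
  next
    case 2
    then show ?thesis using assms by (simp add: from_one_weight_0_right P1_def)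
  next
    case 3
    have switch: "switch_weight p00 p01 p10 p11 M a z
        = (\<Sum>j=1..c1 a (a + z). real ((a-1) choose (j-1)) * p11^(a-j) * p10^j
            * real ((a+z-a-1) choose (j-1)) * p01^(j-1) * p00^(a+z-a-j))"
      unfolding switch_weight_def
      by (rule sum_atMost_eq_sum_atLeastAtMost)
        (use 3 assms in \<open>auto simp: c1_def runs_weight_eq_0 runs_weight_0_right runs_weight_eq_binomial\<close>)
    have return: "return_weight p00 p01 p10 p11 M a z
        = (\<Sum>j=1..c2 a (a + z). real ((a-1) choose j) * p11^(a-j-1) * p10^j
            * real ((a+z-a-1) choose (j-1)) * p01^j * p00^(a+z-a-j))"
      unfolding return_weight_def
      by (rule sum_atMost_eq_sum_atLeastAtMost)
        (use 3 assms in \<open>auto simp: c2_def runs_weight_eq_0 runs_weight_0_right runs_weight_eq_binomial\<close>)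
    show ?thesis
      using 3 by (simp only: from_one_weight_def switch return P1_def) simp
  qed
qed

lemma P2_eq_P1_swap:
  assumes "0 < N" "k \<le> N"
  shows "P2 p00 p01 p10 p11 k N = P1 p11 p10 p01 p00 (N - k) N"
proof -
  have "N - (N - k) = k" using assms by simp
  then show ?thesis
    using assms unfolding P1_def P2_def c1_def c2_def c3_def
    by (simp add: min.commute mult_ac) arith
qed

lemma paths_weight_eq_from_one_weight:
  fixes p00 p01 p10 p11 :: real
  defines "T \<equiv> trans_prob p00 p01 p10 p11"
  assumes "n < M" "k \<le> Suc n"
  shows "paths_weight T True n k = from_one_weight p00 p01 p10 p11 M k (Suc n - k)
    \<and> paths_weight T False n k = from_one_weight p11 p10 p01 p00 M (Suc n - k) k"
  using assms(2,3)
proof (induction n arbitrary: k)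
  case 0
  then consider "k = 0" | "k = 1" by linarith
  then show ?case
    by cases (simp_all add: paths_weight_0 from_one_weight_0_left from_one_weight_0_right)
next
  case (Suc n)
  have T_values: "T True True = p11" "T True False = p10" "T False True = p01" "T False False = p00"
    by (simp_all add: T_def trans_prob_def)
  have from_True: "paths_weight T True (Suc n) k = from_one_weight p00 p01 p10 p11 M k (Suc (Suc n) - k)"
  proof (cases k)
    case 0
    then show ?thesis by (simp add: paths_weight_True_0 from_one_weight_0_left)
  next
    case (Suc a)
    with Suc.prems Suc.IH[of a] show ?thesis
      by (simp add: paths_weight_True_Suc from_one_weight_Suc T_values)
  qed
  have from_False: "paths_weight T False (Suc n) k = from_one_weight p11 p10 p01 p00 M (Suc (Suc n) - k) k"
  proof (cases "k \<le> Suc n")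
    case True
    then have "Suc (Suc n) - k = Suc (Suc n - k)" by arith
    with True Suc.prems Suc.IH[of k] show ?thesis
      by (simp add: paths_weight_False_Suc from_one_weight_Suc[of _ _ _ p11 p10 p01 p00] T_values)
  next
    case False
    with Suc.prems show ?thesis
      by (simp add: paths_weight_False_Suc paths_weight_eq_0 from_one_weight_0_left)
  qed
  from from_True from_False show ?case by simp
qed

corollary paths_weight_eq_P1_P2:
  assumes "0 < N" "k \<le> N"
  shows "paths_weight (trans_prob p00 p01 p10 p11) True (N - 1) k = P1 p00 p01 p10 p11 k N"
    and "paths_weight (trans_prob p00 p01 p10 p11) False (N - 1) k = P2 p00 p01 p10 p11 k N"
proof -
  have "Suc (N - 1) - k = N - k" using assms by simp
  with paths_weight_eq_from_one_weight[of "N - 1" N k] assms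
  have "paths_weight (trans_prob p00 p01 p10 p11) True (N - 1) k
          = from_one_weight p00 p01 p10 p11 N k (N - k)"
    and "paths_weight (trans_prob p00 p01 p10 p11) False (N - 1) k
          = from_one_weight p11 p10 p01 p00 N (N - k) k"
    by simp_all
  with assms show "paths_weight (trans_prob p00 p01 p10 p11) True (N - 1) k = P1 p00 p01 p10 p11 k N"
    and "paths_weight (trans_prob p00 p01 p10 p11) False (N - 1) k = P2 p00 p01 p10 p11 k N"
    by (simp_all add: from_one_weight_eq_P1 P2_eq_P1_swap)
qed

lemma card_eq_length_filter_trajectory:
  "card {t \<in> {1..N}. X t \<omega>} = length (filter id (map (\<lambda>t. X t \<omega>) [1..<Suc N]))"
proof -
  have "{t \<in> {1..N}. X t \<omega>} = {t. X t \<omega>} \<inter> set [1..<Suc N]" by auto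
  then show ?thesis by (simp add: filter_map distinct_length_filter comp_def)
qed

lemma measure_eq_sum_trajectories:
  fixes X :: "nat \<Rightarrow> 'a \<Rightarrow> 'b::finite"
  assumes "finite_measure M"
    and rv: "\<And>t. t \<in> {1..N} \<Longrightarrow> X t \<in> measurable M (count_space UNIV)"
  shows "measure M {\<omega> \<in> space M. P (map (\<lambda>t. X t \<omega>) [1..<Suc N])}
    = (\<Sum>xs | length xs = N \<and> P xs. measure M {\<omega> \<in> space M. \<forall>t\<in>{1..N}. X t \<omega> = xs ! (t - 1)})"
proof -
  interpret finite_measure M by fact
  define traj where "traj \<omega> = map (\<lambda>t. X t \<omega>) [1..<Suc N]" for \<omega>
  define L where "L = {xs :: 'b list. length xs = N \<and> P xs}"
  define C where "C xs = {\<omega> \<in> space M. traj \<omega> = xs}" for xs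
  have traj_eq: "traj \<omega> = xs \<longleftrightarrow> (\<forall>t\<in>{1..N}. X t \<omega> = xs ! (t - 1))" if "length xs = N" for \<omega> xs
  proof -
    have "traj \<omega> = xs \<longleftrightarrow> (\<forall>i\<in>{..<N}. X (Suc i) \<omega> = xs ! i)"
      using that by (auto simp: traj_def list_eq_iff_nth_eq simp del: upt_Suc)
    also have "\<dots> \<longleftrightarrow> (\<forall>t\<in>Suc ` {..<N}. X t \<omega> = xs ! (t - 1))"
      by simp
    also have "Suc ` {..<N} = {1..N}"
      by (rule image_Suc_lessThan)
    finally show ?thesis .
  qed
  have C_eq: "C xs = {\<omega> \<in> space M. \<forall>t\<in>{1..N}. X t \<omega> = xs ! (t - 1)}" if "xs \<in> L" for xs
    using that traj_eq by (auto simp: C_def L_def)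
  have "finite L"
    using finite_lists_length_eq[of "UNIV :: 'b set" N] unfolding L_def
    by (rule finite_subset[rotated]) auto
  moreover have "C ` L \<subseteq> sets M"
  proof (clarify)
    fix xs assume "xs \<in> L"
    have "{\<omega> \<in> space M. X t \<omega> = xs ! (t - 1)} \<in> sets M" if "t \<in> {1..N}" for t
      using measurable_sets[OF rv[OF that], of "{xs ! (t - 1)}"] by (simp add: vimage_def Int_def conj_commute)
    then show "C xs \<in> sets M" unfolding C_eq[OF \<open>xs \<in> L\<close>] by (intro sets.sets_Collect_finite_All) auto
  qed
  moreover have "disjoint_family_on C L"
    by (auto simp: disjoint_family_on_def C_def)
  moreover have "{\<omega> \<in> space M. P (traj \<omega>)} = (\<Union>xs\<in>L. C xs)"
    by (auto simp: C_def L_def traj_def)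
  ultimately have "measure M {\<omega> \<in> space M. P (traj \<omega>)} = (\<Sum>xs\<in>L. measure M (C xs))"
    by (simp add: finite_measure_finite_Union)
  then show ?thesis
    using C_eq by (simp add: traj_def L_def)
qed

lemma sum_by_initial_state:
  "(\<Sum>xs | length xs = Suc n \<and> length (filter id xs) = k. f (hd xs) * path_weight T xs)
   = f True * paths_weight T True n k + f False * paths_weight T False n k"
  unfolding sum_bool_lists_length_Suc paths_weight_def by (simp add: sum_distrib_left)

theorem theorem1:
  fixes M :: "'a measure" and X :: "nat \<Rightarrow> 'a \<Rightarrow> bool"
    and N k :: nat and p0 p1 p00 p01 p10 p11 :: real
  assumes "prob_space M"
    and "N \<ge> 1"
    and "p0 \<ge> 0" "p1 \<ge> 0" "p0 + p1 = 1"
    and "p00 \<ge> 0" "p01 \<ge> 0" "p10 \<ge> 0" "p11 \<ge> 0"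
    and "p00 + p01 = 1" "p10 + p11 = 1"
    and rv: "\<And>t. t \<in> {1..N} \<Longrightarrow> X t \<in> measurable M (count_space UNIV)"
    and markov: "\<And>s :: nat \<Rightarrow> bool.
       measure M {\<omega> \<in> space M. \<forall>t\<in>{1..N}. X t \<omega> = s t}
       = init_prob p0 p1 (s 1) * (\<Prod>t\<in>{1..<N}. trans_prob p00 p01 p10 p11 (s t) (s (Suc t)))"
    and "k \<le> N"
  shows "measure M {\<omega> \<in> space M. card {t \<in> {1..N}. X t \<omega>} = k}
         = p1 * P1 p00 p01 p10 p11 k N + p0 * P2 p00 p01 p10 p11 k N"
proof -
  interpret prob_space M by fact
  let ?T = "trans_prob p00 p01 p10 p11"
  have cylinder: "measure M {\<omega> \<in> space M. \<forall>t\<in>{1..N}. X t \<omega> = xs ! (t - 1)}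
      = init_prob p0 p1 (hd xs) * path_weight ?T xs" if "length xs = N" for xs
  proof -
    have "hd xs = xs ! 0" using that \<open>N \<ge> 1\<close> by (cases xs) auto
    then show ?thesis using markov[of "\<lambda>t. xs ! (t - 1)"] that by (simp add: path_weight_eq_prod)
  qed
  have "measure M {\<omega> \<in> space M. card {t \<in> {1..N}. X t \<omega>} = k}
      = (\<Sum>xs | length xs = N \<and> length (filter id xs) = k.
           measure M {\<omega> \<in> space M. \<forall>t\<in>{1..N}. X t \<omega> = xs ! (t - 1)})"
    unfolding card_eq_length_filter_trajectory
    by (rule measure_eq_sum_trajectories[OF finite_measure_axioms rv])
  also have "\<dots> = (\<Sum>xs | length xs = Suc (N - 1) \<and> length (filter id xs) = k.
           init_prob p0 p1 (hd xs) * path_weight ?T xs)"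
    using \<open>N \<ge> 1\<close> cylinder by (intro sum.cong) auto
  also have "\<dots> = p1 * P1 p00 p01 p10 p11 k N + p0 * P2 p00 p01 p10 p11 k N"
    using paths_weight_eq_P1_P2[of N k p00 p01 p10 p11] \<open>N \<ge> 1\<close> \<open>k \<le> N\<close>
    unfolding sum_by_initial_state by (simp add: init_prob_def)
  finally show ?thesis .
qed

end
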